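(* Let $k$ be a field and let $X$ be a $\mathcal{T}$-space. Then $\rho^{-1}\circ\rho_*\simeq\mathrm{id}_{\mathrm{Mod}(k_X)}$. In particular the functor $\rho_*:\mathrm{Mod}(k_X)\to\mathrm{Mod}(k_\mathcal{T})$ is fully faithful.
   Context: Let $X$ be a topological space and $\mathcal{T}$ a family of open subsets of $X$. A $\mathcal{T}$-subset of $X$ is a finite Boolean combination of elements of $\mathcal{T}$; a $\mathcal{T}$-connected subset is a $\mathcal{T}$-subset which is not the disjoint union of two proper $\mathcal{T}$-subsets that are both open and closed in it. $X$ is a $\mathcal{T}$-space if (i) $\mathcal{T}$ is a basis of the topology of $X$ and $\emptyset\in\mathcal{T}$; (ii) $\mathcal{T}$ is closed under finite unions and finite intersections; (iii) every $U\in\mathcal{T}$ has finitely many $\mathcal{T}$-connected components. $X_\mathcal{T}$ is the site whose underlying category is $\mathcal{T}$ (morphisms are inclusions), a family $\{U_i\}\subset\mathcal{T}$ of subsets of $U\in\mathcal{T}$ being a covering of $U$ iff it admits a finite subfamily whose union is $U$. $\mathrm{Mod}(k_\mathcal{T})$ (resp. $\mathrm{Mod}(k_X)$) is the category of sheaves of $k$-vector spaces on $X_\mathcal{T}$ (resp. $X$). $\rho:X\to X_\mathcal{T}$ is the natural morphism of sites, $\rho_*F(U)=F(U)$ for $U\in\mathcal{T}$, and $\rho^{-1}$ is the left adjoint of $\rho_*$. *)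

theory Defs
  imports "HOL-Analysis.Analysis"
begin

inductive_set Tsubsets :: "'x topology \<Rightarrow> 'x set set \<Rightarrow> 'x set set"
  for X :: "'x topology" and T :: "'x set set" where
  basic: "U \<in> T \<Longrightarrow> U \<in> Tsubsets X T"
| compl: "A \<in> Tsubsets X T \<Longrightarrow> topspace X - A \<in> Tsubsets X T"
| union: "A \<in> Tsubsets X T \<Longrightarrow> B \<in> Tsubsets X T \<Longrightarrow> A \<union> B \<in> Tsubsets X T"

definition T_connected :: "'x topology \<Rightarrow> 'x set set \<Rightarrow> 'x set \<Rightarrow> bool" where
  "T_connected X T S \<longleftrightarrow> S \<in> Tsubsets X T \<and>
     \<not> (\<exists>A B. A \<in> Tsubsets X T \<and> B \<in> Tsubsets X T \<and> A \<subset> S \<and> B \<subset> S \<and>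
             A \<inter> B = {} \<and> A \<union> B = S \<and>
             openin (subtopology X S) A \<and> closedin (subtopology X S) A \<and>
             openin (subtopology X S) B \<and> closedin (subtopology X S) B)"

definition T_components :: "'x topology \<Rightarrow> 'x set set \<Rightarrow> 'x set \<Rightarrow> 'x set set" where
  "T_components X T U = {C. C \<subseteq> U \<and> C \<noteq> {} \<and> T_connected X T C \<and>
     (\<forall>D. T_connected X T D \<and> C \<subseteq> D \<and> D \<subseteq> U \<longrightarrow> D = C)}"

definition T_space :: "'x topology \<Rightarrow> 'x set set \<Rightarrow> bool" where
  "T_space X T \<longleftrightarrow>
     (\<forall>U\<in>T. openin X U) \<and>
     (\<forall>U. openin X U \<longrightarrow> (\<forall>x\<in>U. \<exists>V\<in>T. x \<in> V \<and> V \<subseteq> U)) \<and>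
     {} \<in> T \<and>
     (\<forall>U\<in>T. \<forall>V\<in>T. U \<union> V \<in> T \<and> U \<inter> V \<in> T) \<and>
     (\<forall>U\<in>T. finite (T_components X T U))"

text \<open>A (pre)sheaf of k-vector spaces with values in the k-vector space 'a (scalar
  multiplication scl): sections sec U form a subspace, restriction maps res U V.\<close>
type_synonym ('k, 'a, 'x) shdata =
  "('k \<Rightarrow> 'a \<Rightarrow> 'a) \<times> ('x set \<Rightarrow> 'a set) \<times> ('x set \<Rightarrow> 'x set \<Rightarrow> 'a \<Rightarrow> 'a)"

definition scl :: "('k, 'a, 'x) shdata \<Rightarrow> 'k \<Rightarrow> 'a \<Rightarrow> 'a" where "scl F = fst F"
definition sec :: "('k, 'a, 'x) shdata \<Rightarrow> 'x set \<Rightarrow> 'a set" where "sec F = fst (snd F)"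
definition res :: "('k, 'a, 'x) shdata \<Rightarrow> 'x set \<Rightarrow> 'x set \<Rightarrow> 'a \<Rightarrow> 'a" where "res F = snd (snd F)"

definition lin_on :: "('k \<Rightarrow> 'a::ab_group_add \<Rightarrow> 'a) \<Rightarrow> ('k \<Rightarrow> 'b::ab_group_add \<Rightarrow> 'b)
    \<Rightarrow> 'a set \<Rightarrow> ('a \<Rightarrow> 'b) \<Rightarrow> bool" where
  "lin_on s1 s2 S f \<longleftrightarrow> (\<forall>x\<in>S. \<forall>y\<in>S. f (x + y) = f x + f y) \<and> (\<forall>c. \<forall>x\<in>S. f (s1 c x) = s2 c (f x))"

text \<open>Presheaf on the poset of "opens" Os (opens of X, or the family T).\<close>
definition presheaf_on :: "'x set set \<Rightarrow> ('k::field, 'a::ab_group_add, 'x) shdata \<Rightarrow> bool" where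
  "presheaf_on Os F \<longleftrightarrow> vector_space (scl F) \<and>
     (\<forall>U\<in>Os. module.subspace (scl F) (sec F U)) \<and>
     (\<forall>U\<in>Os. \<forall>V\<in>Os. V \<subseteq> U \<longrightarrow> lin_on (scl F) (scl F) (sec F U) (res F U V) \<and> res F U V ` sec F U \<subseteq> sec F V) \<and>
     (\<forall>U\<in>Os. \<forall>x\<in>sec F U. res F U U x = x) \<and>
     (\<forall>U\<in>Os. \<forall>V\<in>Os. \<forall>W\<in>Os. W \<subseteq> V \<longrightarrow> V \<subseteq> U \<longrightarrow> (\<forall>x\<in>sec F U. res F V W (res F U V x) = res F U W x))"

definition sheaf_cond :: "'x set set \<Rightarrow> ('x set \<Rightarrow> 'x set set \<Rightarrow> bool) \<Rightarrow> ('k, 'a, 'x) shdata \<Rightarrow> bool" where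
  "sheaf_cond Os cov F \<longleftrightarrow> (\<forall>U\<in>Os. \<forall>\<U>. cov U \<U> \<longrightarrow>
     (\<forall>x\<in>sec F U. \<forall>y\<in>sec F U. (\<forall>V\<in>\<U>. res F U V x = res F U V y) \<longrightarrow> x = y) \<and>
     (\<forall>f. (\<forall>V\<in>\<U>. f V \<in> sec F V) \<and>
          (\<forall>V\<in>\<U>. \<forall>W\<in>\<U>. res F V (V \<inter> W) (f V) = res F W (V \<inter> W) (f W))
          \<longrightarrow> (\<exists>x\<in>sec F U. \<forall>V\<in>\<U>. res F U V x = f V)))"

text \<open>Coverings on X (usual) and on the site X_T (finite subcovering required).\<close>
definition cov_X :: "'x topology \<Rightarrow> 'x set \<Rightarrow> 'x set set \<Rightarrow> bool" where
  "cov_X X U \<U> \<longleftrightarrow> (\<forall>V\<in>\<U>. openin X V) \<and> \<Union>\<U> = U"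

definition cov_T :: "'x set set \<Rightarrow> 'x set \<Rightarrow> 'x set set \<Rightarrow> bool" where
  "cov_T T U \<U> \<longleftrightarrow> \<U> \<subseteq> T \<and> (\<forall>V\<in>\<U>. V \<subseteq> U) \<and> (\<exists>\<V>\<subseteq>\<U>. finite \<V> \<and> \<Union>\<V> = U)"

definition opens :: "'x topology \<Rightarrow> 'x set set" where
  "opens X = {U. openin X U}"

definition sheaf_X :: "'x topology \<Rightarrow> ('k::field, 'a::ab_group_add, 'x) shdata \<Rightarrow> bool" where
  "sheaf_X X F \<longleftrightarrow> presheaf_on (opens X) F \<and> sheaf_cond (opens X) (cov_X X) F"

definition sheaf_T :: "'x set set \<Rightarrow> ('k::field, 'a::ab_group_add, 'x) shdata \<Rightarrow> bool" where
  "sheaf_T T F \<longleftrightarrow> presheaf_on T F \<and> sheaf_cond T (cov_T T) F"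

text \<open>Morphisms of (pre)sheaves over Os (two morphisms are equal iff they agree on sections).\<close>
definition shmor :: "'x set set \<Rightarrow> ('k, 'a::ab_group_add, 'x) shdata \<Rightarrow> ('k, 'b::ab_group_add, 'x) shdata
    \<Rightarrow> ('x set \<Rightarrow> 'a \<Rightarrow> 'b) \<Rightarrow> bool" where
  "shmor Os F G \<phi> \<longleftrightarrow>
     (\<forall>U\<in>Os. lin_on (scl F) (scl G) (sec F U) (\<phi> U) \<and> \<phi> U ` sec F U \<subseteq> sec G U) \<and>
     (\<forall>U\<in>Os. \<forall>V\<in>Os. V \<subseteq> U \<longrightarrow> (\<forall>x\<in>sec F U. \<phi> V (res F U V x) = res G U V (\<phi> U x)))"

definition mor_eq :: "'x set set \<Rightarrow> ('k, 'a, 'x) shdata \<Rightarrow> ('x set \<Rightarrow> 'a \<Rightarrow> 'b) \<Rightarrow> ('x set \<Rightarrow> 'a \<Rightarrow> 'b) \<Rightarrow> bool" where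
  "mor_eq Os F \<phi> \<psi> \<longleftrightarrow> (\<forall>U\<in>Os. \<forall>x\<in>sec F U. \<phi> U x = \<psi> U x)"

text \<open>The direct image rho_* : Mod(k_X) \<rightarrow> Mod(k_T): (rho_* F)(U) = F(U) for U in T.
  On morphisms, rho_* \<psi> is \<psi> restricted to U in T.\<close>
definition rho_push :: "('k, 'a, 'x) shdata \<Rightarrow> ('k, 'a, 'x) shdata" where
  "rho_push F = F"

definition mcomp :: "('x set \<Rightarrow> 'b \<Rightarrow> 'c) \<Rightarrow> ('x set \<Rightarrow> 'a \<Rightarrow> 'b) \<Rightarrow> ('x set \<Rightarrow> 'a \<Rightarrow> 'c)" where
  "mcomp \<psi> \<phi> = (\<lambda>U x. \<psi> U (\<phi> U x))"

text \<open>(G, \<eta>) is a value of a left adjoint rho^{-1} at the T-sheaf H, tested against the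
  sheaves F on X (universal arrow from H to rho_*): for every sheaf F on X and every
  morphism f : H \<rightarrow> rho_* F there is a unique g : G \<rightarrow> F with rho_* g \<circ> \<eta> = f.\<close>
definition universal_against ::
  "'x topology \<Rightarrow> 'x set set \<Rightarrow> ('k::field, 'h::ab_group_add, 'x) shdata \<Rightarrow> ('k, 'c::ab_group_add, 'x) shdata
    \<Rightarrow> ('x set \<Rightarrow> 'h \<Rightarrow> 'c) \<Rightarrow> ('k, 'a::ab_group_add, 'x) shdata \<Rightarrow> bool" where
  "universal_against X T H G \<eta> F \<longleftrightarrow>
     (\<forall>f. shmor T H (rho_push F) f \<longrightarrow>
        (\<exists>g. shmor (opens X) G F g \<and> mor_eq T H (mcomp g \<eta>) f) \<and>
        (\<forall>g g'. shmor (opens X) G F g \<and> shmor (opens X) G F g' \<and>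
                mor_eq T H (mcomp g \<eta>) f \<and> mor_eq T H (mcomp g' \<eta>) f \<longrightarrow> mor_eq (opens X) G g g'))"

definition sh_iso :: "'x topology \<Rightarrow> ('k, 'a::ab_group_add, 'x) shdata \<Rightarrow> ('k, 'b::ab_group_add, 'x) shdata
    \<Rightarrow> ('x set \<Rightarrow> 'a \<Rightarrow> 'b) \<Rightarrow> bool" where
  "sh_iso X F G \<phi> \<longleftrightarrow> shmor (opens X) F G \<phi> \<and>
     (\<exists>\<psi>. shmor (opens X) G F \<psi> \<and> mor_eq (opens X) F (mcomp \<psi> \<phi>) (\<lambda>U x. x)
          \<and> mor_eq (opens X) G (mcomp \<phi> \<psi>) (\<lambda>U x. x))"

end

theory Submission
  imports Defs
begin

text \<open>Since \<open>\<T>\<close> is a basis of \<open>X\<close> closed under intersections, every open \<open>U\<close> is covered by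
  \<open>{V \<in> \<T>. V \<subseteq> U}\<close>, and the overlaps of this cover again lie in \<open>\<T>\<close>. Hence a sheaf on \<open>X\<close> is
  recovered from its sections over \<open>\<T>\<close> by gluing: a morphism given on \<open>\<T>\<close> extends uniquely to
  all opens, so \<open>\<rho>\<^sub>*\<close> is fully faithful. For the counit \<open>\<epsilon> : \<rho>\<inverse>\<rho>\<^sub>*F \<rightarrow> F\<close> one then extends the
  unit \<open>\<eta> : \<rho>\<^sub>*F \<rightarrow> \<rho>\<^sub>*\<rho>\<inverse>\<rho>\<^sub>*F\<close> to a morphism \<open>\<psi>\<close> of sheaves on \<open>X\<close>: faithfulness gives
  \<open>\<epsilon> \<circ> \<psi> = id\<close>, and the uniqueness in the universal property of \<open>\<eta>\<close> gives \<open>\<psi> \<circ> \<epsilon> = id\<close>.\<close>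

lemma in_opens_iff: "U \<in> opens X \<longleftrightarrow> openin X U"
  by (simp add: opens_def)

lemma T_space_base:
  assumes "T_space X T"
  shows "openin X = arbitrary union_of (\<lambda>V. V \<in> T)"
  using assms unfolding T_space_def openin_topology_base_unique by blast

lemma T_space_Int: "T_space X T \<Longrightarrow> \<forall>U\<in>T. \<forall>V\<in>T. U \<inter> V \<in> T"
  unfolding T_space_def by blast

lemma base_subset_opens:
  "openin X = arbitrary union_of (\<lambda>V. V \<in> B) \<Longrightarrow> V \<in> B \<Longrightarrow> V \<in> opens X"
  unfolding openin_topology_base_unique opens_def by blast

lemma cov_X_base:
  assumes "openin X = arbitrary union_of (\<lambda>V. V \<in> B)" and "openin X U"
  shows "cov_X X U {V \<in> B. V \<subseteq> U}"
  using assms unfolding openin_topology_base_unique cov_X_def by blast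

lemma presheaf_onD:
  assumes "presheaf_on Os F"
  shows presheaf_on_vector_space: "vector_space (scl F)"
    and presheaf_on_subspace: "U \<in> Os \<Longrightarrow> module.subspace (scl F) (sec F U)"
    and presheaf_on_res_lin: "U \<in> Os \<Longrightarrow> V \<in> Os \<Longrightarrow> V \<subseteq> U
      \<Longrightarrow> lin_on (scl F) (scl F) (sec F U) (res F U V)"
    and presheaf_on_res_in: "U \<in> Os \<Longrightarrow> V \<in> Os \<Longrightarrow> V \<subseteq> U \<Longrightarrow> x \<in> sec F U
      \<Longrightarrow> res F U V x \<in> sec F V"
    and presheaf_on_res_res: "U \<in> Os \<Longrightarrow> V \<in> Os \<Longrightarrow> W \<in> Os \<Longrightarrow> W \<subseteq> V \<Longrightarrow> V \<subseteq> U
      \<Longrightarrow> x \<in> sec F U \<Longrightarrow> res F V W (res F U V x) = res F U W x"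
  using assms unfolding presheaf_on_def by (elim conjE; simp add: image_subset_iff)+

lemma presheaf_on_res_add:
  "presheaf_on Os F \<Longrightarrow> U \<in> Os \<Longrightarrow> V \<in> Os \<Longrightarrow> V \<subseteq> U \<Longrightarrow> x \<in> sec F U \<Longrightarrow> y \<in> sec F U
    \<Longrightarrow> res F U V (x + y) = res F U V x + res F U V y"
  using presheaf_on_res_lin unfolding lin_on_def by blast

lemma presheaf_on_res_scale:
  "presheaf_on Os F \<Longrightarrow> U \<in> Os \<Longrightarrow> V \<in> Os \<Longrightarrow> V \<subseteq> U \<Longrightarrow> x \<in> sec F U
    \<Longrightarrow> res F U V (scl F c x) = scl F c (res F U V x)"
  using presheaf_on_res_lin unfolding lin_on_def by blast

lemma presheaf_on_add_in:
  "presheaf_on Os F \<Longrightarrow> U \<in> Os \<Longrightarrow> x \<in> sec F U \<Longrightarrow> y \<in> sec F U \<Longrightarrow> x + y \<in> sec F U"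
  using module.subspace_add[OF module_iff_vector_space[THEN iffD2]]
    presheaf_on_vector_space presheaf_on_subspace by blast

lemma presheaf_on_scale_in:
  "presheaf_on Os F \<Longrightarrow> U \<in> Os \<Longrightarrow> x \<in> sec F U \<Longrightarrow> scl F c x \<in> sec F U"
  using module.subspace_scale[OF module_iff_vector_space[THEN iffD2]]
    presheaf_on_vector_space presheaf_on_subspace by blast

lemma sheaf_X_presheaf: "sheaf_X X F \<Longrightarrow> presheaf_on (opens X) F"
  unfolding sheaf_X_def by blast

lemma sheaf_X_cov:
  assumes "sheaf_X X G" "openin X U" "cov_X X U \<U>"
  shows sheaf_X_eqI: "a \<in> sec G U \<Longrightarrow> b \<in> sec G U \<Longrightarrow> (\<And>V. V \<in> \<U> \<Longrightarrow> res G U V a = res G U V b)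
      \<Longrightarrow> a = b"
    and sheaf_X_glue: "(\<And>V. V \<in> \<U> \<Longrightarrow> f V \<in> sec G V)
      \<Longrightarrow> (\<And>V W. V \<in> \<U> \<Longrightarrow> W \<in> \<U> \<Longrightarrow> res G V (V \<inter> W) (f V) = res G W (V \<inter> W) (f W))
      \<Longrightarrow> \<exists>x\<in>sec G U. \<forall>V\<in>\<U>. res G U V x = f V"
proof -
  have "sheaf_cond (opens X) (cov_X X) G" using assms(1) unfolding sheaf_X_def by blast
  then have "(\<forall>x\<in>sec G U. \<forall>y\<in>sec G U. (\<forall>V\<in>\<U>. res G U V x = res G U V y) \<longrightarrow> x = y) \<and>
     (\<forall>f. (\<forall>V\<in>\<U>. f V \<in> sec G V) \<and>
          (\<forall>V\<in>\<U>. \<forall>W\<in>\<U>. res G V (V \<inter> W) (f V) = res G W (V \<inter> W) (f W))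
          \<longrightarrow> (\<exists>x\<in>sec G U. \<forall>V\<in>\<U>. res G U V x = f V))"
    using assms(2,3) unfolding sheaf_cond_def opens_def by (metis mem_Collect_eq)
  then show "a \<in> sec G U \<Longrightarrow> b \<in> sec G U \<Longrightarrow> (\<And>V. V \<in> \<U> \<Longrightarrow> res G U V a = res G U V b)
      \<Longrightarrow> a = b"
    and "(\<And>V. V \<in> \<U> \<Longrightarrow> f V \<in> sec G V)
      \<Longrightarrow> (\<And>V W. V \<in> \<U> \<Longrightarrow> W \<in> \<U> \<Longrightarrow> res G V (V \<inter> W) (f V) = res G W (V \<inter> W) (f W))
      \<Longrightarrow> \<exists>x\<in>sec G U. \<forall>V\<in>\<U>. res G U V x = f V"
    by blast+
qed

lemma sheaf_X_eq_if_res_base_eq: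
  assumes "openin X = arbitrary union_of (\<lambda>V. V \<in> B)" "sheaf_X X G" "openin X U"
    and "a \<in> sec G U" "b \<in> sec G U" "\<And>V. V \<in> B \<Longrightarrow> V \<subseteq> U \<Longrightarrow> res G U V a = res G U V b"
  shows "a = b"
  using sheaf_X_eqI[OF assms(2,3) cov_X_base[OF assms(1,3)] assms(4,5)] assms(6) by blast

lemma shmor_in: "shmor Os F G \<phi> \<Longrightarrow> U \<in> Os \<Longrightarrow> x \<in> sec F U \<Longrightarrow> \<phi> U x \<in> sec G U"
  unfolding shmor_def by blast

lemma shmor_res:
  "shmor Os F G \<phi> \<Longrightarrow> U \<in> Os \<Longrightarrow> V \<in> Os \<Longrightarrow> V \<subseteq> U \<Longrightarrow> x \<in> sec F U
    \<Longrightarrow> \<phi> V (res F U V x) = res G U V (\<phi> U x)"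
  unfolding shmor_def by blast

lemma shmor_add:
  "shmor Os F G \<phi> \<Longrightarrow> U \<in> Os \<Longrightarrow> x \<in> sec F U \<Longrightarrow> y \<in> sec F U \<Longrightarrow> \<phi> U (x + y) = \<phi> U x + \<phi> U y"
  unfolding shmor_def lin_on_def by blast

lemma shmor_scale:
  "shmor Os F G \<phi> \<Longrightarrow> U \<in> Os \<Longrightarrow> x \<in> sec F U \<Longrightarrow> \<phi> U (scl F c x) = scl G c (\<phi> U x)"
  unfolding shmor_def lin_on_def by blast

lemma shmor_id: "shmor Os F F (\<lambda>U x. x)"
  unfolding shmor_def lin_on_def by simp

lemma shmor_mcomp: "shmor Os F G \<phi> \<Longrightarrow> shmor Os G H \<psi> \<Longrightarrow> shmor Os F H (mcomp \<psi> \<phi>)"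
  unfolding shmor_def mcomp_def lin_on_def by (simp add: image_subset_iff)

lemma mor_eq_opens_if_mor_eq_base:
  assumes B: "openin X = arbitrary union_of (\<lambda>V. V \<in> B)"
    and F: "presheaf_on (opens X) F" and G: "sheaf_X X G"
    and \<psi>: "shmor (opens X) F G \<psi>" and \<psi>': "shmor (opens X) F G \<psi>'"
    and eq: "mor_eq B F \<psi> \<psi>'"
  shows "mor_eq (opens X) F \<psi> \<psi>'"
  unfolding mor_eq_def
proof (intro ballI)
  fix U x assume U: "U \<in> opens X" and x: "x \<in> sec F U"
  have "res G U V (\<psi> U x) = res G U V (\<psi>' U x)" if V: "V \<in> B" "V \<subseteq> U" for V
  proof -
    have Vo: "V \<in> opens X" using base_subset_opens[OF B V(1)] .
    have "res F U V x \<in> sec F V" using presheaf_on_res_in[OF F U Vo V(2) x] .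
    then show ?thesis
      using eq V(1) shmor_res[OF \<psi> U Vo V(2) x] shmor_res[OF \<psi>' U Vo V(2) x]
      unfolding mor_eq_def by simp
  qed
  moreover have "openin X U" using U by (simp add: in_opens_iff)
  ultimately show "\<psi> U x = \<psi>' U x"
    using sheaf_X_eq_if_res_base_eq[OF B G _ shmor_in[OF \<psi> U x] shmor_in[OF \<psi>' U x]] by blast
qed

locale base_extension =
  fixes X :: "'x topology" and B :: "'x set set"
    and F :: "('k::field, 'a::ab_group_add, 'x) shdata" and G :: "('k, 'b::ab_group_add, 'x) shdata"
    and \<phi> :: "'x set \<Rightarrow> 'a \<Rightarrow> 'b"
  assumes base: "openin X = arbitrary union_of (\<lambda>V. V \<in> B)"
    and base_Int: "\<forall>U\<in>B. \<forall>V\<in>B. U \<inter> V \<in> B"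
    and F: "presheaf_on (opens X) F" and G: "sheaf_X X G" and \<phi>: "shmor B F G \<phi>"
begin

definition extends_at :: "'x set \<Rightarrow> 'a \<Rightarrow> 'b \<Rightarrow> bool" where
  "extends_at U x y \<longleftrightarrow> y \<in> sec G U \<and> (\<forall>V\<in>B. V \<subseteq> U \<longrightarrow> res G U V y = \<phi> V (res F U V x))"

definition extension :: "'x set \<Rightarrow> 'a \<Rightarrow> 'b" where
  "extension U x = (SOME y. extends_at U x y)"

lemma opens_base: "V \<in> B \<Longrightarrow> V \<in> opens X"
  using base_subset_opens[OF base] .

lemma G_presheaf: "presheaf_on (opens X) G"
  using sheaf_X_presheaf[OF G] .

lemma extends_at_unique: "U \<in> opens X \<Longrightarrow> extends_at U x y \<Longrightarrow> extends_at U x y' \<Longrightarrow> y = y'"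
  unfolding extends_at_def in_opens_iff using sheaf_X_eq_if_res_base_eq[OF base G] by metis

lemma extends_at_exists:
  assumes U: "U \<in> opens X" and x: "x \<in> sec F U"
  shows "\<exists>y. extends_at U x y"
proof -
  define f where "f V = \<phi> V (res F U V x)" for V
  have res_in: "res F U V x \<in> sec F V" if "V \<in> B" "V \<subseteq> U" for V
    using presheaf_on_res_in[OF F U opens_base] that x by blast
  have res_f: "res G V (V \<inter> W) (f V) = \<phi> (V \<inter> W) (res F U (V \<inter> W) x)"
    if V: "V \<in> B" "V \<subseteq> U" and W: "W \<in> B" for V W
  proof -
    have VW: "V \<inter> W \<in> B" using base_Int V(1) W by blast
    have "res G V (V \<inter> W) (f V) = \<phi> (V \<inter> W) (res F V (V \<inter> W) (res F U V x))"
      unfolding f_def using shmor_res[OF \<phi> V(1) VW _ res_in[OF V]] by simp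
    also have "\<dots> = \<phi> (V \<inter> W) (res F U (V \<inter> W) x)"
      using presheaf_on_res_res[OF F U opens_base[OF V(1)] opens_base[OF VW] _ V(2) x] by simp
    finally show ?thesis .
  qed
  have compat: "res G V (V \<inter> W) (f V) = res G W (V \<inter> W) (f W)"
    if "V \<in> {V \<in> B. V \<subseteq> U}" "W \<in> {V \<in> B. V \<subseteq> U}" for V W
    using that res_f[of V W] res_f[of W V] by (simp add: Int_commute)
  have f_in: "f V \<in> sec G V" if "V \<in> {V \<in> B. V \<subseteq> U}" for V
    unfolding f_def using shmor_in[OF \<phi>] res_in that by blast
  have oU: "openin X U" using U by (simp add: in_opens_iff)
  obtain y where "y \<in> sec G U" "\<forall>V\<in>{V \<in> B. V \<subseteq> U}. res G U V y = f V"
    using sheaf_X_glue[OF G oU cov_X_base[OF base oU] f_in compat] by blast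
  then show ?thesis unfolding extends_at_def f_def by blast
qed

lemma extends_at_extension: "U \<in> opens X \<Longrightarrow> x \<in> sec F U \<Longrightarrow> extends_at U x (extension U x)"
  unfolding extension_def using someI_ex[OF extends_at_exists] .

lemma extension_eqI: "U \<in> opens X \<Longrightarrow> x \<in> sec F U \<Longrightarrow> extends_at U x y \<Longrightarrow> extension U x = y"
  using extends_at_unique extends_at_extension by blast

lemma extension_in: "U \<in> opens X \<Longrightarrow> x \<in> sec F U \<Longrightarrow> extension U x \<in> sec G U"
  using extends_at_extension unfolding extends_at_def by blast

lemma res_extension: "U \<in> opens X \<Longrightarrow> x \<in> sec F U \<Longrightarrow> V \<in> B \<Longrightarrow> V \<subseteq> U
    \<Longrightarrow> res G U V (extension U x) = \<phi> V (res F U V x)"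
  using extends_at_extension unfolding extends_at_def by blast

lemma extension_add:
  assumes U: "U \<in> opens X" and a: "a \<in> sec F U" and b: "b \<in> sec F U"
  shows "extension U (a + b) = extension U a + extension U b"
proof (rule extension_eqI[OF U presheaf_on_add_in[OF F U a b]], unfold extends_at_def, intro conjI ballI impI)
  show "extension U a + extension U b \<in> sec G U"
    using presheaf_on_add_in[OF G_presheaf U extension_in[OF U a] extension_in[OF U b]] .
  fix V assume V: "V \<in> B" "V \<subseteq> U"
  note Vo = opens_base[OF V(1)]
  have "res G U V (extension U a + extension U b) = \<phi> V (res F U V a) + \<phi> V (res F U V b)"
    using presheaf_on_res_add[OF G_presheaf U Vo V(2) extension_in[OF U a] extension_in[OF U b]]
      res_extension[OF U a V] res_extension[OF U b V] by simp
  also have "\<dots> = \<phi> V (res F U V (a + b))"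
    using shmor_add[OF \<phi> V(1)] presheaf_on_res_in[OF F U Vo V(2)] a b
      presheaf_on_res_add[OF F U Vo V(2) a b] by simp
  finally show "res G U V (extension U a + extension U b) = \<phi> V (res F U V (a + b))" .
qed

lemma extension_scale:
  assumes U: "U \<in> opens X" and a: "a \<in> sec F U"
  shows "extension U (scl F c a) = scl G c (extension U a)"
proof (rule extension_eqI[OF U presheaf_on_scale_in[OF F U a]], unfold extends_at_def, intro conjI ballI impI)
  show "scl G c (extension U a) \<in> sec G U"
    using presheaf_on_scale_in[OF G_presheaf U extension_in[OF U a]] .
  fix V assume V: "V \<in> B" "V \<subseteq> U"
  note Vo = opens_base[OF V(1)]
  have "res G U V (scl G c (extension U a)) = scl G c (\<phi> V (res F U V a))"
    using presheaf_on_res_scale[OF G_presheaf U Vo V(2) extension_in[OF U a]] res_extension[OF U a V] by simp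
  also have "\<dots> = \<phi> V (res F U V (scl F c a))"
    using shmor_scale[OF \<phi> V(1) presheaf_on_res_in[OF F U Vo V(2) a]]
      presheaf_on_res_scale[OF F U Vo V(2) a] by simp
  finally show "res G U V (scl G c (extension U a)) = \<phi> V (res F U V (scl F c a))" .
qed

lemma extension_res:
  assumes U: "U \<in> opens X" and V: "V \<in> opens X" "V \<subseteq> U" and x: "x \<in> sec F U"
  shows "extension V (res F U V x) = res G U V (extension U x)"
proof (rule extension_eqI[OF V(1) presheaf_on_res_in[OF F U V x]], unfold extends_at_def, intro conjI ballI impI)
  show "res G U V (extension U x) \<in> sec G V"
    using presheaf_on_res_in[OF G_presheaf U V extension_in[OF U x]] .
  fix W assume W: "W \<in> B" "W \<subseteq> V"
  note Wo = opens_base[OF W(1)]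
  have "res G V W (res G U V (extension U x)) = \<phi> W (res F U W x)"
    using presheaf_on_res_res[OF G_presheaf U V(1) Wo W(2) V(2) extension_in[OF U x]]
      res_extension[OF U x W(1)] W(2) V(2) by auto
  also have "\<dots> = \<phi> W (res F V W (res F U V x))"
    using presheaf_on_res_res[OF F U V(1) Wo W(2) V(2) x] by simp
  finally show "res G V W (res G U V (extension U x)) = \<phi> W (res F V W (res F U V x))" .
qed

lemma shmor_extension: "shmor (opens X) F G extension"
  unfolding shmor_def lin_on_def
  by (simp add: extension_in extension_add extension_scale extension_res image_subset_iff)

lemma mor_eq_extension: "mor_eq B F extension \<phi>"
  unfolding mor_eq_def
proof (intro ballI)
  fix U x assume U: "U \<in> B" and x: "x \<in> sec F U"
  have "extends_at U x (\<phi> U x)"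
    unfolding extends_at_def using shmor_in[OF \<phi> U x] shmor_res[OF \<phi> U _ _ x] by auto
  then show "extension U x = \<phi> U x" using extension_eqI[OF opens_base[OF U] x] by blast
qed

end

lemma shmor_extend_from_base:
  assumes "openin X = arbitrary union_of (\<lambda>V. V \<in> B)" "\<forall>U\<in>B. \<forall>V\<in>B. U \<inter> V \<in> B"
    and "presheaf_on (opens X) F" "sheaf_X X G" "shmor B F G \<phi>"
  shows "\<exists>\<psi>. shmor (opens X) F G \<psi> \<and> mor_eq B F \<psi> \<phi>"
proof -
  interpret base_extension X B F G \<phi> using assms by unfold_locales
  show ?thesis using shmor_extension mor_eq_extension by blast
qed

lemma counit_iso_if_universal:
  assumes B: "openin X = arbitrary union_of (\<lambda>V. V \<in> B)"
    and B_Int: "\<forall>U\<in>B. \<forall>V\<in>B. U \<inter> V \<in> B"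
    and F: "sheaf_X X F" and G: "sheaf_X X G" and \<eta>: "shmor B F G \<eta>"
    and univ_F: "universal_against X B F G \<eta> F" and univ_G: "universal_against X B F G \<eta> G"
  shows "\<exists>\<epsilon>. shmor (opens X) G F \<epsilon> \<and> mor_eq B F (mcomp \<epsilon> \<eta>) (\<lambda>U x. x) \<and> sh_iso X G F \<epsilon>"
proof -
  obtain \<epsilon> where \<epsilon>: "shmor (opens X) G F \<epsilon>" and \<epsilon>\<eta>: "mor_eq B F (mcomp \<epsilon> \<eta>) (\<lambda>U x. x)"
    using univ_F shmor_id[of B F] unfolding universal_against_def rho_push_def by blast
  obtain \<psi> where \<psi>: "shmor (opens X) F G \<psi>" and \<psi>\<eta>: "mor_eq B F \<psi> \<eta>"
    using shmor_extend_from_base[OF B B_Int sheaf_X_presheaf[OF F] G \<eta>] by blast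
  have "mor_eq (opens X) F (mcomp \<epsilon> \<psi>) (\<lambda>U x. x)"
  proof (rule mor_eq_opens_if_mor_eq_base[OF B sheaf_X_presheaf[OF F] F shmor_mcomp[OF \<psi> \<epsilon>] shmor_id])
    show "mor_eq B F (mcomp \<epsilon> \<psi>) (\<lambda>U x. x)"
      using \<epsilon>\<eta> \<psi>\<eta> by (simp add: mor_eq_def mcomp_def)
  qed
  moreover have "mor_eq (opens X) G (mcomp \<psi> \<epsilon>) (\<lambda>U x. x)"
  proof -
    have "mor_eq B F (mcomp (mcomp \<psi> \<epsilon>) \<eta>) \<eta>" and "mor_eq B F (mcomp (\<lambda>U x. x) \<eta>) \<eta>"
      using \<epsilon>\<eta> \<psi>\<eta> by (simp_all add: mor_eq_def mcomp_def)
    then show ?thesis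
      using univ_G \<eta> shmor_mcomp[OF \<epsilon> \<psi>] shmor_id[of "opens X" G]
      unfolding universal_against_def rho_push_def by blast
  qed
  ultimately show ?thesis using \<epsilon> \<epsilon>\<eta> \<psi> unfolding sh_iso_def by blast
qed

theorem mainTheorem11:
  fixes X :: "'x topology" and T :: "'x set set"
  assumes "T_space X T"
  shows
    "(\<forall>(F :: ('k::field, 'a::ab_group_add, 'x) shdata) (G :: ('k, 'c::ab_group_add, 'x) shdata) \<eta>.
        sheaf_X X F \<and> sheaf_X X G \<and> shmor T (rho_push F) (rho_push G) \<eta> \<and>
        (\<forall>F' :: ('k, 'a, 'x) shdata. sheaf_X X F' \<longrightarrow> universal_against X T (rho_push F) G \<eta> F') \<and>
        (\<forall>G' :: ('k, 'c, 'x) shdata. sheaf_X X G' \<longrightarrow> universal_against X T (rho_push F) G \<eta> G')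
      \<longrightarrow> (\<exists>\<epsilon>. shmor (opens X) G F \<epsilon> \<and> mor_eq T (rho_push F) (mcomp \<epsilon> \<eta>) (\<lambda>U x. x)
               \<and> sh_iso X G F \<epsilon>))
     \<and>
     (\<forall>(F :: ('k, 'a, 'x) shdata) (G :: ('k, 'b::ab_group_add, 'x) shdata).
        sheaf_X X F \<and> sheaf_X X G \<longrightarrow>
        (\<forall>\<phi>. shmor T (rho_push F) (rho_push G) \<phi> \<longrightarrow>
           (\<exists>\<psi>. shmor (opens X) F G \<psi> \<and> mor_eq T F \<psi> \<phi>)) \<and>
        (\<forall>\<psi> \<psi>'. shmor (opens X) F G \<psi> \<and> shmor (opens X) F G \<psi>' \<and> mor_eq T F \<psi> \<psi>'
           \<longrightarrow> mor_eq (opens X) F \<psi> \<psi>'))"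
proof -
  note B = T_space_base[OF assms] and B_Int = T_space_Int[OF assms]
  show ?thesis
    unfolding rho_push_def
  proof (intro conjI allI impI; elim conjE)
    fix F :: "('k, 'a, 'x) shdata" and G :: "('k, 'c, 'x) shdata" and \<eta>
    assume F: "sheaf_X X F" and G: "sheaf_X X G" and \<eta>: "shmor T F G \<eta>"
      and "\<forall>F' :: ('k, 'a, 'x) shdata. sheaf_X X F' \<longrightarrow> universal_against X T F G \<eta> F'"
      and "\<forall>G' :: ('k, 'c, 'x) shdata. sheaf_X X G' \<longrightarrow> universal_against X T F G \<eta> G'"
    then show "\<exists>\<epsilon>. shmor (opens X) G F \<epsilon> \<and> mor_eq T F (mcomp \<epsilon> \<eta>) (\<lambda>U x. x) \<and> sh_iso X G F \<epsilon>"
      using counit_iso_if_universal[OF B B_Int F G \<eta>] F G by blast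
  next
    fix F :: "('k, 'a, 'x) shdata" and G :: "('k, 'b, 'x) shdata" and \<phi>
    assume "sheaf_X X F" "sheaf_X X G" "shmor T F G \<phi>"
    then show "\<exists>\<psi>. shmor (opens X) F G \<psi> \<and> mor_eq T F \<psi> \<phi>"
      using shmor_extend_from_base[OF B B_Int sheaf_X_presheaf] by blast
  next
    fix F :: "('k, 'a, 'x) shdata" and G :: "('k, 'b, 'x) shdata" and \<psi> \<psi>'
    assume "sheaf_X X F" "sheaf_X X G"
      and "shmor (opens X) F G \<psi>" "shmor (opens X) F G \<psi>'" "mor_eq T F \<psi> \<psi>'"
    then show "mor_eq (opens X) F \<psi> \<psi>'"
      using mor_eq_opens_if_mor_eq_base[OF B sheaf_X_presheaf] by blast
  qed
qed

end
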